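(* Let $R$ be a uniform $L$-layered $1$-semifield$^\dagger$, let $a\in R$, and let $f=\sum_{i=0}^m \alpha_i^{[\ell_i]}\lambda^i\in R[\lambda]$ be $a$-primary. Then for $b\in R_k$ (i.e. $b$ of layer $k$), $$f(b)=\begin{cases} (b^m)^{[k^m]} & \text{if } b>_\nu a,\\ (a^m)^{[\sum_i \ell_i k^i]} & \text{if } b\cong_\nu a,\\ \alpha_0^{[\ell_0]} & \text{if } b<_\nu a.\end{cases}$$
   Context: Concretely, $R=R(L,\mathcal{G})$ where $L$ is a totally ordered semiring$^\dagger$ (semiring without necessarily a zero) and $\mathcal{G}$ a totally ordered abelian group: elements are written $x^{[\ell]}$ with $x\in\mathcal{G}$ the value and $\ell\in L$ the layer, with $x^{[k]}y^{[\ell]}=(xy)^{[k\ell]}$ and $x^{[k]}+y^{[\ell]}$ equal to $x^{[k]}$ if $x>y$, $y^{[\ell]}$ if $x<y$, $x^{[k+\ell]}$ if $x=y$; $R_k$ denotes the elements of layer $k$. In the claim, $(c)^{[\ell]}$ denotes the element whose $\mathcal{G}$-value is that of $c$ and whose layer is $\ell$. $x\cong_\nu y$ means equal $\mathcal{G}$-values, and $x<_\nu y$ means the $\mathcal{G}$-value of $x$ is smaller. A polynomial of degree $t$ is monic if its leading coefficient is $\nu$-equivalent to $\mathbb{1}_R$; a monic polynomial $f$ of degree $t$ is $a$-primary if $f=\lambda^t+\sum_j\alpha_j\lambda^{i_j}$ with $\alpha_j\cong_\nu a^{t-i_j}$ for all $j$. Polynomials are evaluated as functions $R\to R$. *)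

theory Defs
  imports Main
begin

text \<open>The uniform layered 1-semifield R(L,G): elements are pairs (x, l) with x the
  G-value (G written additively as a linearly ordered abelian group) and l the layer.\<close>

type_synonym ('g, 'l) layered = "'g \<times> 'l"

definition lmul :: "('g::ab_group_add, 'l::times) layered \<Rightarrow> ('g, 'l) layered \<Rightarrow> ('g, 'l) layered" where
  "lmul p q = (fst p + fst q, snd p * snd q)"

definition ladd :: "('g::linorder, 'l::plus) layered \<Rightarrow> ('g, 'l) layered \<Rightarrow> ('g, 'l) layered" where
  "ladd p q = (if fst q < fst p then p else if fst p < fst q then q
               else (fst p, snd p + snd q))"

definition lone :: "('g::zero, 'l::one) layered" where
  "lone = (0, 1)"

primrec lpow :: "('g::ab_group_add, 'l::monoid_mult) layered \<Rightarrow> nat \<Rightarrow> ('g, 'l) layered" where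
  "lpow b 0 = lone"
| "lpow b (Suc n) = lmul b (lpow b n)"

text \<open>Fold of a binary operation over a nonempty list (sums in a structure without zero).\<close>
fun fold_ne :: "('a \<Rightarrow> 'a \<Rightarrow> 'a) \<Rightarrow> 'a list \<Rightarrow> 'a" where
  "fold_ne f [x] = x"
| "fold_ne f (x # y # xs) = f x (fold_ne f (y # xs))"
| "fold_ne f [] = undefined"

definition peval :: "nat \<Rightarrow> (nat \<Rightarrow> ('g::linordered_ab_group_add, 'l::{plus,monoid_mult}) layered)
                     \<Rightarrow> ('g, 'l) layered \<Rightarrow> ('g, 'l) layered" where
  "peval m c b = fold_ne ladd (map (\<lambda>i. lmul (c i) (lpow b i)) [0..<Suc m])"

definition primary :: "('g::linordered_ab_group_add, 'l::monoid_mult) layered \<Rightarrow> nat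
                       \<Rightarrow> (nat \<Rightarrow> ('g, 'l) layered) \<Rightarrow> bool" where
  "primary a m c \<longleftrightarrow> c m = lone \<and> (\<forall>i<m. fst (c i) = fst (lpow a (m - i)))"

end

theory Submission
  imports Defs
begin

text \<open>For a-primary f the \<nu>-values of the monomials c_i b^i form an arithmetic progression
  with common difference b - a (G written additively).  Hence if b exceeds a in \<nu>-value the
  leading monomial strictly dominates all others, if b is below a the constant term does, and if
  they are \<nu>-equivalent all monomials tie at the value a^m, so that their layers add up.\<close>

lemma fold_ne_Cons: "ws \<noteq> [] \<Longrightarrow> fold_ne f (z # ws) = f z (fold_ne f ws)"
  by (cases ws) auto

lemma fst_fold_ne_ladd_mem:
  fixes xs :: "('g::linorder \<times> 'l::plus) list"
  shows "xs \<noteq> [] \<Longrightarrow> fst (fold_ne ladd xs) \<in> fst ` set xs"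
proof (induction xs)
  case (Cons w ws) then show ?case by (cases ws) (auto simp: ladd_def)
qed simp

lemma fold_ne_ladd_const:
  fixes xs :: "('g::linorder \<times> 'l::plus) list"
  shows "xs \<noteq> [] \<Longrightarrow> \<forall>x\<in>set xs. fst x = v \<Longrightarrow> fold_ne ladd xs = (v, fold_ne (+) (map snd xs))"
proof (induction xs)
  case (Cons w ws) then show ?case by (cases ws) (auto simp: ladd_def)
qed simp

lemma fold_ne_ladd_Cons_dominant:
  fixes x :: "'g::linorder \<times> 'l::plus"
  assumes "\<forall>z\<in>set ys. fst z < fst x"
  shows "fold_ne ladd (x # ys) = x"
proof (cases "ys = []")
  case False
  then have "fst (fold_ne ladd ys) \<in> fst ` set ys" by (rule fst_fold_ne_ladd_mem)
  with assms have "fst (fold_ne ladd ys) < fst x" by auto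
  then have "ladd x (fold_ne ladd ys) = x" by (simp add: ladd_def)
  with False show ?thesis by (simp add: fold_ne_Cons)
qed simp

lemma fold_ne_ladd_snoc_dominant:
  fixes x :: "'g::linorder \<times> 'l::plus"
  shows "\<forall>z\<in>set ys. fst z < fst x \<Longrightarrow> fold_ne ladd (ys @ [x]) = x"
proof (induction ys)
  case (Cons w ws)
  then have "fold_ne ladd (w # ws @ [x]) = ladd w x" by (simp add: fold_ne_Cons)
  also have "\<dots> = x" using Cons.prems by (auto simp: ladd_def)
  finally show ?case by simp
qed simp

lemma fst_lpow_Suc: "fst (lpow p (Suc n)) = fst p + fst (lpow p n)"
  by (simp add: lmul_def)

lemma snd_lpow: "snd (lpow (y, k) n) = k ^ n"
  by (induction n) (auto simp: lmul_def lone_def)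

context
  fixes V :: "nat \<Rightarrow> 'g::linordered_ab_group_add" and d :: 'g and m :: nat
  assumes step: "\<And>i. i < m \<Longrightarrow> V (Suc i) = V i + d"
begin

lemma arith_prog_less_last: "0 < d \<Longrightarrow> j < m \<Longrightarrow> V j < V m"
proof (induction "m - j" arbitrary: j)
  case (Suc n)
  have "V j < V (Suc j)" using step[of j] Suc.prems by simp
  moreover have "Suc j = m \<or> V (Suc j) < V m" using Suc by (cases "Suc j = m") auto
  ultimately show ?case by auto
qed simp

lemma arith_prog_less_first: "d < 0 \<Longrightarrow> 0 < j \<Longrightarrow> j \<le> m \<Longrightarrow> V j < V 0"
proof (induction j)
  case (Suc i)
  have "V (Suc i) < V i" using step[of i] Suc.prems by simp
  moreover have "i = 0 \<or> V i < V 0" using Suc by (cases "i = 0") auto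
  ultimately show ?case by auto
qed simp

lemma arith_prog_const: "d = 0 \<Longrightarrow> j \<le> m \<Longrightarrow> V j = V 0"
  by (induction j) (use step in auto)

end

definition pterm :: "(nat \<Rightarrow> ('g::ab_group_add, 'l::monoid_mult) layered) \<Rightarrow> ('g, 'l) layered
                     \<Rightarrow> nat \<Rightarrow> ('g, 'l) layered" where
  "pterm c b i = lmul (c i) (lpow b i)"

lemma peval_eq_fold_pterm: "peval m c b = fold_ne ladd (map (pterm c b) [0..<Suc m])"
  unfolding peval_def pterm_def ..

lemma primary_coeff_value:
  "primary a m c \<Longrightarrow> i \<le> m \<Longrightarrow> fst (c i) = fst (lpow a (m - i))"
  by (cases "i = m") (auto simp: primary_def lone_def)

lemma primary_pterm_value_Suc:
  assumes "primary a m c" "i < m"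
  shows "fst (pterm c b (Suc i)) = fst (pterm c b i) + (fst b - fst a)"
proof -
  have "m - i = Suc (m - Suc i)" using assms(2) by simp
  then have "fst (lpow a (m - i)) = fst a + fst (lpow a (m - Suc i))"
    by (simp only: fst_lpow_Suc)
  then show ?thesis
    using primary_coeff_value[OF assms(1), of i] primary_coeff_value[OF assms(1), of "Suc i"] assms(2)
    by (simp add: pterm_def lmul_def algebra_simps)
qed

lemma peval_top_dominant:
  "\<forall>j<m. fst (pterm c b j) < fst (pterm c b m) \<Longrightarrow> peval m c b = pterm c b m"
  unfolding peval_eq_fold_pterm by (simp, rule fold_ne_ladd_snoc_dominant) auto

lemma peval_bottom_dominant:
  assumes "\<forall>j. 0 < j \<and> j \<le> m \<longrightarrow> fst (pterm c b j) < fst (pterm c b 0)"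
  shows "peval m c b = pterm c b 0"
proof -
  have "map (pterm c b) [0..<Suc m] = pterm c b 0 # map (pterm c b) [Suc 0..<Suc m]"
    by (simp add: upt_conv_Cons del: upt_Suc)
  moreover have "\<forall>z\<in>set (map (pterm c b) [Suc 0..<Suc m]). fst z < fst (pterm c b 0)"
    using assms by auto
  ultimately show ?thesis
    unfolding peval_eq_fold_pterm by (simp only: fold_ne_ladd_Cons_dominant)
qed

lemma peval_tie:
  "\<forall>j\<le>m. fst (pterm c b j) = v \<Longrightarrow>
   peval m c b = (v, fold_ne (+) (map (\<lambda>i. snd (pterm c b i)) [0..<Suc m]))"
  unfolding peval_eq_fold_pterm
  by (subst fold_ne_ladd_const) (auto simp: o_def simp del: upt_Suc)

context
  fixes a :: "('g::linordered_ab_group_add, 'l::{plus, monoid_mult}) layered"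
    and c and m and b :: "('g, 'l) layered"
  assumes primary: "primary a m c"
begin

lemma peval_primary_above: "fst a < fst b \<Longrightarrow> peval m c b = pterm c b m"
  by (intro peval_top_dominant allI impI
      arith_prog_less_last[where V = "\<lambda>i. fst (pterm c b i)" and d = "fst b - fst a" and m = m])
    (simp_all add: primary_pterm_value_Suc[OF primary] diff_gt_0_iff_gt)

lemma peval_primary_below: "fst b < fst a \<Longrightarrow> peval m c b = pterm c b 0"
  by (intro peval_bottom_dominant allI impI
      arith_prog_less_first[where V = "\<lambda>i. fst (pterm c b i)" and d = "fst b - fst a" and m = m])
    (simp_all add: primary_pterm_value_Suc[OF primary] diff_less_0_iff_less)

lemma peval_primary_tie:
  assumes "fst b = fst a"
  shows "peval m c b = (fst (lpow a m), fold_ne (+) (map (\<lambda>i. snd (pterm c b i)) [0..<Suc m]))"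
proof (rule peval_tie, intro allI impI)
  fix j assume "j \<le> m"
  then have "fst (pterm c b j) = fst (pterm c b 0)"
    by (intro arith_prog_const[where V = "\<lambda>i. fst (pterm c b i)"])
      (simp_all add: primary_pterm_value_Suc[OF primary] assms)
  also have "\<dots> = fst (lpow a m)"
    using primary_coeff_value[OF primary, of 0] by (simp add: pterm_def lmul_def lone_def)
  finally show "fst (pterm c b j) = fst (lpow a m)" .
qed

end

theorem proposition7p16:
  fixes a :: "'g::linordered_ab_group_add \<times> 'l::{semiring, ab_semigroup_add, monoid_mult, linorder}"
    and c :: "nat \<Rightarrow> 'g \<times> 'l"
    and m :: nat and y :: 'g and k :: 'l
  assumes "primary a m c"
  shows "peval m c (y, k) =
    (if fst a < y then (fst (lpow (y, k) m), k ^ m)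
     else if y = fst a then (fst (lpow a m), fold_ne (+) (map (\<lambda>i. snd (c i) * k ^ i) [0..<Suc m]))
     else c 0)"
proof -
  have "c m = lone" using assms by (simp add: primary_def)
  then have above: "pterm c (y, k) m = (fst (lpow (y, k) m), k ^ m)"
    by (simp add: pterm_def lmul_def lone_def snd_lpow)
  have tie_layers: "snd (pterm c (y, k) i) = snd (c i) * k ^ i" for i
    by (simp add: pterm_def lmul_def snd_lpow)
  have below: "pterm c (y, k) 0 = c 0"
    by (simp add: pterm_def lmul_def lone_def)
  consider "fst a < y" | "y = fst a" | "y < fst a" by fastforce
  then show ?thesis
    by cases (use peval_primary_above[OF assms] peval_primary_tie[OF assms]
        peval_primary_below[OF assms] above below tie_layers in \<open>auto simp del: upt_Suc\<close>)
qed

end
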